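(* Let $X$ be a compact Hausdorff space with its canonical uniform structure, $f\colon X\setminus I(f)\to X$ a partially continuous self-map, and $\xi,\xi'$ two admissible sequences for $(X,f)$. Let $\mathcal E,\mathcal E',\mathcal E''$ be symmetric entourages with $\mathcal E'\circ\mathcal E'\subseteq\mathcal E$ and $\mathcal E''\circ\mathcal E''\subseteq\mathcal E'$, and let $n\ge0$. Then (i) if $\xi_n\subseteq\xi'_n$, then $S(n,\xi,\mathcal E)\le S(n,\xi',\mathcal E)$; (ii) if $\overline{\xi_n}\subseteq\overline{\xi'_n}$, then $R(n,\xi,\mathcal E)\le R(n,\xi',\mathcal E'')$. In particular, if $\overline{\xi_n}\subseteq\overline{\xi'_n}$ for all sufficiently large $n$, then $h_{\mathrm{top}}(f,\xi)\le h_{\mathrm{top}}(f,\xi')$.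
   Context: A partially continuous self-map is a continuous $f\colon X\setminus I(f)\to X$ with $I(f)$ closed. Entourages of the canonical uniform structure are the neighbourhoods of the diagonal; $\mathcal E'\circ\mathcal E'=\{(x,y):\exists z,(x,z),(z,y)\in\mathcal E'\}$. An admissible sequence is a sequence $\xi=(\xi_n)_{n\ge0}$ of subsets of $X$ with $\xi_n\subseteq X\setminus I(f)$ and $f(\xi_n)\subseteq\xi_{n-1}$ for $n\ge1$. Let $\xi^{\max}_0=X$, $\xi^{\max}_n=\{x\in X\setminus I(f):f(x)\in\xi^{\max}_{n-1}\}$; for $x\in\xi^{\max}_n$, $B^n_{\mathcal E}(x)=\{y\in\xi^{\max}_n:(f^i(x),f^i(y))\in\mathcal E,0\le i\le n\}$. Points $x,y\in\xi_n$ are $(n,\xi,\mathcal E)$-separated if $x\notin B^n_{\mathcal E}(y)$; $F\subset\xi_n$ is $(n,\xi,\mathcal E)$-covering if $\xi_n\subseteq\bigcup_{x\in F}B^n_{\mathcal E}(x)$. $R(n,\xi,\mathcal E)$ is the minimal cardinality of a covering set, $S(n,\xi,\mathcal E)$ the maximal cardinality of a pairwise separated set, and $h_{\mathrm{top}}(f,\xi)=\sup_{\mathcal E}\limsup_n\frac1n\log S(n,\xi,\mathcal E)=\sup_{\mathcal E}\limsup_n\frac1n\log R(n,\xi,\mathcal E)$ (set to $-\infty$ if some $\xi_n$ is empty). *)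

theory Defs
  imports "HOL-Analysis.Analysis" "HOL-Library.Extended_Nat" "HOL-Library.Extended_Real"
begin

text \<open>Canonical uniform structure of a compact Hausdorff space X: entourages are the
  neighbourhoods of the diagonal in X \<times> X (product topology).\<close>
definition entourage :: "'a topology \<Rightarrow> ('a \<times> 'a) set \<Rightarrow> bool" where
  "entourage X E \<longleftrightarrow> E \<subseteq> topspace X \<times> topspace X \<and>
     (\<exists>U. openin (prod_topology X X) U \<and> {(x, x) | x. x \<in> topspace X} \<subseteq> U \<and> U \<subseteq> E)"

definition sym_entourage :: "'a topology \<Rightarrow> ('a \<times> 'a) set \<Rightarrow> bool" where
  "sym_entourage X E \<longleftrightarrow> entourage X E \<and> (\<forall>x y. (x, y) \<in> E \<longrightarrow> (y, x) \<in> E)"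

definition partially_continuous :: "'a topology \<Rightarrow> 'a set \<Rightarrow> ('a \<Rightarrow> 'a) \<Rightarrow> bool" where
  "partially_continuous X I f \<longleftrightarrow> closedin X I \<and>
     continuous_map (subtopology X (topspace X - I)) X f"

definition admissible :: "'a topology \<Rightarrow> 'a set \<Rightarrow> ('a \<Rightarrow> 'a) \<Rightarrow> (nat \<Rightarrow> 'a set) \<Rightarrow> bool" where
  "admissible X I f \<xi> \<longleftrightarrow> (\<forall>n. \<xi> n \<subseteq> topspace X - I) \<and> (\<forall>n. f ` \<xi> (Suc n) \<subseteq> \<xi> n)"

fun xi_max :: "'a topology \<Rightarrow> 'a set \<Rightarrow> ('a \<Rightarrow> 'a) \<Rightarrow> nat \<Rightarrow> 'a set" where
  "xi_max X I f 0 = topspace X"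
| "xi_max X I f (Suc n) = {x \<in> topspace X - I. f x \<in> xi_max X I f n}"

definition dyn_ball :: "'a topology \<Rightarrow> 'a set \<Rightarrow> ('a \<Rightarrow> 'a) \<Rightarrow> nat \<Rightarrow> ('a \<times> 'a) set \<Rightarrow> 'a \<Rightarrow> 'a set" where
  "dyn_ball X I f n E x = {y \<in> xi_max X I f n. \<forall>i\<le>n. ((f ^^ i) x, (f ^^ i) y) \<in> E}"

definition separated_set :: "'a topology \<Rightarrow> 'a set \<Rightarrow> ('a \<Rightarrow> 'a) \<Rightarrow> nat \<Rightarrow> (nat \<Rightarrow> 'a set) \<Rightarrow> ('a \<times> 'a) set \<Rightarrow> 'a set \<Rightarrow> bool" where
  "separated_set X I f n \<xi> E F \<longleftrightarrow> F \<subseteq> \<xi> n \<and>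
     (\<forall>x\<in>F. \<forall>y\<in>F. x \<noteq> y \<longrightarrow> x \<notin> dyn_ball X I f n E y)"

definition covering_set :: "'a topology \<Rightarrow> 'a set \<Rightarrow> ('a \<Rightarrow> 'a) \<Rightarrow> nat \<Rightarrow> (nat \<Rightarrow> 'a set) \<Rightarrow> ('a \<times> 'a) set \<Rightarrow> 'a set \<Rightarrow> bool" where
  "covering_set X I f n \<xi> E F \<longleftrightarrow> F \<subseteq> \<xi> n \<and> \<xi> n \<subseteq> (\<Union>x\<in>F. dyn_ball X I f n E x)"

definition ecard :: "'a set \<Rightarrow> enat" where
  "ecard A = (if finite A then enat (card A) else \<infinity>)"

definition S_num :: "'a topology \<Rightarrow> 'a set \<Rightarrow> ('a \<Rightarrow> 'a) \<Rightarrow> nat \<Rightarrow> (nat \<Rightarrow> 'a set) \<Rightarrow> ('a \<times> 'a) set \<Rightarrow> enat" where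
  "S_num X I f n \<xi> E = (SUP F \<in> {F. separated_set X I f n \<xi> E F}. ecard F)"

definition R_num :: "'a topology \<Rightarrow> 'a set \<Rightarrow> ('a \<Rightarrow> 'a) \<Rightarrow> nat \<Rightarrow> (nat \<Rightarrow> 'a set) \<Rightarrow> ('a \<times> 'a) set \<Rightarrow> enat" where
  "R_num X I f n \<xi> E = (INF F \<in> {F. covering_set X I f n \<xi> E F}. ecard F)"

definition elog :: "enat \<Rightarrow> ereal" where
  "elog k = (if k = \<infinity> then \<infinity> else if k = 0 then -\<infinity> else ereal (ln (real (the_enat k))))"

definition htop :: "'a topology \<Rightarrow> 'a set \<Rightarrow> ('a \<Rightarrow> 'a) \<Rightarrow> (nat \<Rightarrow> 'a set) \<Rightarrow> ereal" where
  "htop X I f \<xi> = (if \<exists>n. \<xi> n = {} then -\<infinity> else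
     (SUP E \<in> {E. entourage X E}. limsup (\<lambda>n. ereal (1 / real n) * elog (S_num X I f n \<xi> E))))"

end

theory Submission
  imports Defs
begin

text \<open>
  Part (i) holds because an (n, \<xi>, E)-separated set is (n, \<xi>', E)-separated.
  The other two parts rest on continuity: the iterates f, ..., f^n are continuous on the
  open set xi_max n, so every point of \<xi> n, lying in the closure of \<xi>' n, has an orbit that
  stays D-close up to time n to the orbit of some point of \<xi>' n, for any entourage D.
  For (ii), take an (n, \<xi>', E'')-covering set, discard the E'-balls around its points that miss
  \<xi> n and replace each remaining centre by a point of \<xi> n in its ball; by the two
  halvings E'' O E'' \<subseteq> E' and E' O E' \<subseteq> E this is an (n, \<xi>, E)-covering set.
  For (iii), compactness and regularity give, for every entourage E, a symmetric entourage D
  with D O D O D \<subseteq> E. Moving each point of an (n, \<xi>, E)-separated set to a D-close point of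
  \<xi>' n is then injective with (n, \<xi>', D)-separated image, so S(n, \<xi>, E) \<le> S(n, \<xi>', D) for
  all large n, and the entropy inequality follows by taking growth rates and the supremum over E.
\<close>

definition orbit_close :: "('a \<Rightarrow> 'a) \<Rightarrow> nat \<Rightarrow> ('a \<times> 'a) set \<Rightarrow> 'a \<Rightarrow> 'a \<Rightarrow> bool" where
  "orbit_close f n E x y \<longleftrightarrow> (\<forall>i\<le>n. ((f ^^ i) x, (f ^^ i) y) \<in> E)"

lemma dyn_ball_iff:
  "y \<in> dyn_ball X I f n E x \<longleftrightarrow> y \<in> xi_max X I f n \<and> orbit_close f n E x y"
  by (simp add: dyn_ball_def orbit_close_def)

lemma orbit_close_relcomp:
  "orbit_close f n D x y \<Longrightarrow> orbit_close f n D' y z \<Longrightarrow> orbit_close f n (D O D') x z"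
  unfolding orbit_close_def by blast

lemma orbit_close_mono:
  "D \<subseteq> E \<Longrightarrow> orbit_close f n D x y \<Longrightarrow> orbit_close f n E x y"
  unfolding orbit_close_def by blast

lemma orbit_close_sym:
  "sym D \<Longrightarrow> orbit_close f n D x y \<Longrightarrow> orbit_close f n D y x"
  unfolding orbit_close_def by (blast dest: symD)

lemma orbit_close_Suc:
  "orbit_close f (Suc n) E x y \<longleftrightarrow> (x, y) \<in> E \<and> orbit_close f n E (f x) (f y)"
proof -
  have "(\<forall>i\<le>Suc n. P i) \<longleftrightarrow> P 0 \<and> (\<forall>i\<le>n. P (Suc i))" for P :: "nat \<Rightarrow> bool"
    by (simp add: All_less_Suc2 flip: less_Suc_eq_le)
  then show ?thesis
    unfolding orbit_close_def by (simp add: funpow_Suc_right del: funpow.simps)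
qed

lemma sym_entourageD:
  assumes "sym_entourage X E"
  shows "entourage X E" "sym E"
  using assms by (auto simp: sym_entourage_def intro: symI)

lemma entourage_diagonal:
  "entourage X E \<Longrightarrow> x \<in> topspace X \<Longrightarrow> (x, x) \<in> E"
  unfolding entourage_def by blast

lemma entourage_openin:
  assumes "openin (prod_topology X X) D" "\<And>x. x \<in> topspace X \<Longrightarrow> (x, x) \<in> D"
  shows "entourage X D"
  using assms openin_subset[OF assms(1)] unfolding entourage_def by fastforce

lemma xi_max_subset_topspace: "xi_max X I f n \<subseteq> topspace X"
  by (cases n) auto

lemma funpow_in_xi_max:
  "x \<in> xi_max X I f n \<Longrightarrow> i \<le> n \<Longrightarrow> (f ^^ i) x \<in> xi_max X I f (n - i)"
proof (induction i)
  case (Suc i)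
  then have "(f ^^ i) x \<in> xi_max X I f (Suc (n - Suc i))"
    by (simp add: Suc_diff_Suc)
  then show ?case by simp
qed simp

lemma dyn_ball_centre:
  assumes "entourage X E" "x \<in> xi_max X I f n"
  shows "x \<in> dyn_ball X I f n E x"
  using assms funpow_in_xi_max xi_max_subset_topspace
  by (fastforce simp: dyn_ball_iff orbit_close_def intro: entourage_diagonal)

lemma admissible_subset_xi_max:
  assumes "admissible X I f \<xi>"
  shows "\<xi> n \<subseteq> xi_max X I f n"
proof (induction n)
  case 0 then show ?case using assms by (auto simp: admissible_def)
next
  case (Suc n) then show ?case using assms by (fastforce simp: admissible_def)
qed

lemma admissible_subset_closure:
  assumes "admissible X I f \<xi>"
  shows "\<xi> n \<subseteq> X closure_of (\<xi> n)"
  using admissible_subset_xi_max[OF assms] xi_max_subset_topspace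
  by (metis closure_of_subset subset_trans)

lemma admissible_empty_upward:
  assumes "admissible X I f \<xi>" "\<xi> m = {}" "m \<le> k"
  shows "\<xi> k = {}"
  using assms(3)
proof (induction k rule: dec_induct)
  case (step j) then show ?case using assms(1) by (fastforce simp: admissible_def)
qed (use assms(2) in simp)

lemma openin_partial_preimage:
  assumes "partially_continuous X I f" "openin X V"
  shows "openin X {x \<in> topspace X - I. f x \<in> V}"
proof -
  have "openin (subtopology X (topspace X - I)) {x \<in> topspace X - I. f x \<in> V}"
    using openin_continuous_map_preimage[of _ X f V] assms
    by (fastforce simp: partially_continuous_def)
  moreover have "openin X (topspace X - I)"
    using assms(1) by (auto simp: partially_continuous_def)
  ultimately show ?thesis
    using openin_trans_full by blast
qed

lemma openin_diagonal_box:
  assumes "openin (prod_topology X X) U" "(y, y) \<in> U"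
  obtains W where "openin X W" "y \<in> W" "W \<times> W \<subseteq> U"
proof -
  obtain A B where "openin X A" "openin X B" "y \<in> A" "y \<in> B" "A \<times> B \<subseteq> U"
    using assms openin_prod_topology_alt by metis
  then show ?thesis
    using that[of "A \<inter> B"] by blast
qed

lemma orbit_close_neighbourhood:
  assumes pc: "partially_continuous X I f"
    and U: "openin (prod_topology X X) U" "\<And>x. x \<in> topspace X \<Longrightarrow> (x, x) \<in> U"
    and "y \<in> xi_max X I f n"
  shows "\<exists>V. openin X V \<and> y \<in> V \<and> (\<forall>z\<in>V. orbit_close f n U y z)"
  using \<open>y \<in> xi_max X I f n\<close>
proof (induction n arbitrary: y)
  case 0
  then obtain W where "openin X W" "y \<in> W" "W \<times> W \<subseteq> U"
    using openin_diagonal_box[OF U(1)] U(2) by (metis xi_max.simps(1))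
  then show ?case
    by (auto simp: orbit_close_def)
next
  case (Suc n)
  then have y: "y \<in> topspace X - I" "f y \<in> xi_max X I f n" by auto
  obtain V where V: "openin X V" "f y \<in> V" "\<forall>z\<in>V. orbit_close f n U (f y) z"
    using Suc.IH y(2) by blast
  obtain W where W: "openin X W" "y \<in> W" "W \<times> W \<subseteq> U"
    using openin_diagonal_box[OF U(1)] U(2) y(1) by blast
  let ?V = "W \<inter> {x \<in> topspace X - I. f x \<in> V}"
  have "openin X ?V"
    using W(1) openin_partial_preimage[OF pc V(1)] by blast
  moreover have "orbit_close f (Suc n) U y z" if "z \<in> ?V" for z
  proof -
    have "(y, z) \<in> U" using W that by blast
    moreover have "orbit_close f n U (f y) (f z)" using V(3) that by blast
    ultimately show ?thesis by (simp add: orbit_close_Suc)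
  qed
  ultimately show ?case
    using W(2) V(2) y(1) by blast
qed

lemma orbit_close_point_of_closure:
  assumes "partially_continuous X I f" "entourage X E"
    and "y \<in> xi_max X I f n" "y \<in> X closure_of S"
  obtains z where "z \<in> S" "orbit_close f n E y z"
proof -
  obtain U where U: "openin (prod_topology X X) U" "\<And>x. x \<in> topspace X \<Longrightarrow> (x, x) \<in> U" "U \<subseteq> E"
    using assms(2) unfolding entourage_def by blast
  obtain V where "openin X V" "y \<in> V" "\<forall>z\<in>V. orbit_close f n U y z"
    using orbit_close_neighbourhood[OF assms(1) U(1,2) assms(3)] by blast
  then obtain z where "z \<in> S" "orbit_close f n U y z"
    using assms(4) unfolding in_closure_of by blast
  then show ?thesis
    using that orbit_close_mono[OF U(3)] by blast
qed

lemma compact_regular_closed_shrinking: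
  assumes "compact_space X" "regular_space X"
    and W: "\<And>x. x \<in> topspace X \<Longrightarrow> openin X (W x) \<and> x \<in> W x"
  obtains K C where "finite K" "K \<subseteq> topspace X" "topspace X \<subseteq> (\<Union>k\<in>K. C k)"
    "\<And>k. k \<in> K \<Longrightarrow> closedin X (C k) \<and> C k \<subseteq> W k"
proof -
  have "neighbourhood_base_of (closedin X) X"
    using assms(2) neighbourhood_base_of_closedin by blast
  then have "\<exists>U C. openin X U \<and> closedin X C \<and> x \<in> U \<and> U \<subseteq> C \<and> C \<subseteq> W x"
    if "x \<in> topspace X" for x
    using W[OF that] unfolding neighbourhood_base_of by blast
  then obtain U C where UC: "\<And>x. x \<in> topspace X \<Longrightarrow>
      openin X (U x) \<and> closedin X (C x) \<and> x \<in> U x \<and> U x \<subseteq> C x \<and> C x \<subseteq> W x"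
    by metis
  have "topspace X \<subseteq> \<Union>(U ` topspace X)" "\<forall>V \<in> U ` topspace X. openin X V"
    using UC by blast+
  then obtain \<F> where "finite \<F>" "\<F> \<subseteq> U ` topspace X" "topspace X \<subseteq> \<Union>\<F>"
    using compact_space_alt[THEN iffD1, OF assms(1), rule_format, of "U ` topspace X"] by blast
  then obtain K where "K \<subseteq> topspace X" "finite K" "\<F> = U ` K"
    using finite_subset_image[OF \<open>finite \<F>\<close> \<open>\<F> \<subseteq> U ` topspace X\<close>] by blast
  show ?thesis
  proof (rule that)
    have "U k \<subseteq> C k" if "k \<in> K" for k
      using UC \<open>K \<subseteq> topspace X\<close> that by blast
    then show "topspace X \<subseteq> (\<Union>k\<in>K. C k)"
      using \<open>topspace X \<subseteq> \<Union>\<F>\<close> \<open>\<F> = U ` K\<close> by blast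
  qed (use \<open>finite K\<close> \<open>K \<subseteq> topspace X\<close> UC in auto)
qed

lemma open_sym_half_entourage:
  assumes "compact_space X" "regular_space X" "entourage X E"
  obtains D where "openin (prod_topology X X) D" "\<And>x. x \<in> topspace X \<Longrightarrow> (x, x) \<in> D"
    "sym D" "D O D \<subseteq> E"
proof -
  define T where "T = topspace X"
  obtain U where U: "openin (prod_topology X X) U" "\<And>x. x \<in> T \<Longrightarrow> (x, x) \<in> U" "U \<subseteq> E"
    using assms(3) unfolding entourage_def T_def by blast
  have "\<exists>W. openin X W \<and> x \<in> W \<and> W \<times> W \<subseteq> U" if "x \<in> T" for x
    using openin_diagonal_box[OF U(1) U(2)[OF that]] by metis
  then obtain W where W: "\<And>x. x \<in> T \<Longrightarrow> openin X (W x) \<and> x \<in> W x \<and> W x \<times> W x \<subseteq> U"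
    by metis
  obtain K C where K: "finite K" "K \<subseteq> T" "T \<subseteq> (\<Union>k\<in>K. C k)"
    and C: "\<And>k. k \<in> K \<Longrightarrow> closedin X (C k) \<and> C k \<subseteq> W k"
    using compact_regular_closed_shrinking[OF assms(1,2), of W] W unfolding T_def by blast
  \<comment> \<open>A pair in D that touches C k lies in W k \<times> W k, so a D-chain through a point of C k stays in U.\<close>
  define G where "G k = (T - C k) \<times> (T - C k) \<union> W k \<times> W k" for k
  define D where "D = \<Inter>(insert (T \<times> T) (G ` K))"
  have "openin (prod_topology X X) (G k)" if "k \<in> K" for k
    using C[OF that] W[of k] K(2) that unfolding G_def T_def
    by (intro openin_Un) (auto simp: openin_prod_Times_iff)
  then have "openin (prod_topology X X) D"
    unfolding D_def T_def using K(1)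
    by (intro openin_Inter) (auto simp: openin_prod_Times_iff)
  moreover have "(x, x) \<in> D" if "x \<in> T" for x
  proof -
    have "(x, x) \<in> G k" if "k \<in> K" for k
      using \<open>x \<in> T\<close> C[OF that] unfolding G_def by blast
    then show ?thesis
      using that unfolding D_def by blast
  qed
  moreover have "sym D"
    unfolding D_def G_def sym_def by blast
  moreover have "D O D \<subseteq> E"
  proof
    fix p assume "p \<in> D O D"
    then obtain a b c where p: "p = (a, c)" "(a, b) \<in> D" "(b, c) \<in> D" by auto
    then obtain k where k: "k \<in> K" "b \<in> C k"
      using K(3) unfolding D_def by blast
    then have "(a, b) \<in> G k" "(b, c) \<in> G k"
      using p unfolding D_def by auto
    then have "a \<in> W k" "c \<in> W k"
      using k unfolding G_def by auto
    then have "(a, c) \<in> U"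
      using W[of k] K(2) k(1) by blast
    then show "p \<in> E"
      using U(3) p(1) by blast
  qed
  ultimately show ?thesis
    using that[of D] unfolding T_def by blast
qed

lemma sym_entourage_cube_subset:
  assumes "compact_space X" "regular_space X" "entourage X E"
  obtains D where "sym_entourage X D" "D O D O D \<subseteq> E"
proof -
  obtain D1 where D1: "openin (prod_topology X X) D1" "\<And>x. x \<in> topspace X \<Longrightarrow> (x, x) \<in> D1"
    "sym D1" "D1 O D1 \<subseteq> E"
    using open_sym_half_entourage[OF assms] by blast
  obtain D where D: "openin (prod_topology X X) D" "\<And>x. x \<in> topspace X \<Longrightarrow> (x, x) \<in> D"
    "sym D" "D O D \<subseteq> D1"
    using open_sym_half_entourage[OF assms(1,2) entourage_openin[OF D1(1,2)]] by blast
  have "D \<subseteq> D O D"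
  proof
    fix p assume "p \<in> D"
    then obtain a b where "p = (a, b)" "(a, b) \<in> D" "b \<in> topspace X"
      using openin_subset[OF D(1)] by auto
    then show "p \<in> D O D"
      using D(2) by blast
  qed
  then have "D O D O D \<subseteq> (D O D) O (D O D)"
    by (rule relcomp_mono[OF _ order_refl])
  also have "\<dots> \<subseteq> E"
    using relcomp_mono[OF D(4) D(4)] D1(4) by (rule order_trans)
  finally have "D O D O D \<subseteq> E" .
  moreover have "sym_entourage X D"
    using entourage_openin[OF D(1,2)] D(3) by (simp add: sym_entourage_def sym_def)
  ultimately show ?thesis
    using that by blast
qed

lemma ecard_image_le:
  assumes "A \<subseteq> B"
  shows "ecard (p ` A) \<le> ecard B"
proof (cases "finite B")
  case True
  then have "finite A"
    using assms finite_subset by blast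
  then have "card (p ` A) \<le> card B"
    using card_image_le card_mono[OF True assms] le_trans by blast
  then show ?thesis
    using True \<open>finite A\<close> by (simp add: ecard_def)
qed (simp add: ecard_def)

lemma ecard_image_inj: "inj_on p A \<Longrightarrow> ecard (p ` A) = ecard A"
  by (auto simp: ecard_def card_image finite_image_iff)

lemma elog_mono:
  assumes "a \<le> b"
  shows "elog a \<le> elog b"
proof (cases b)
  case (enat l)
  then obtain k where k: "a = enat k" "k \<le> l"
    using assms by (cases a) auto
  then show ?thesis
    using enat by (cases "k = 0") (auto simp: elog_def zero_enat_def)
qed (simp add: elog_def)

lemma limsup_growth_rate_mono:
  assumes "eventually (\<lambda>k. a k \<le> b k) sequentially"
  shows "limsup (\<lambda>k. ereal (1 / real k) * elog (a k)) \<le> limsup (\<lambda>k. ereal (1 / real k) * elog (b k))"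
  using assms by (intro Limsup_mono) (auto elim!: eventually_mono intro: ereal_mult_left_mono elog_mono)

lemma separated_set_mono:
  assumes "separated_set X I f n \<xi> E F" "\<xi> n \<subseteq> \<xi>' n"
  shows "separated_set X I f n \<xi>' E F"
  using assms unfolding separated_set_def by (meson order_trans)

lemma S_num_mono:
  assumes "\<xi> n \<subseteq> \<xi>' n"
  shows "S_num X I f n \<xi> E \<le> S_num X I f n \<xi>' E"
  unfolding S_num_def
proof (rule SUP_subset_mono)
  show "{F. separated_set X I f n \<xi> E F} \<subseteq> {F. separated_set X I f n \<xi>' E F}"
    using separated_set_mono[where \<xi>=\<xi> and \<xi>'=\<xi>' and n=n, OF _ assms] by blast
qed simp

lemma R_num_le_of_closure_subset:
  assumes pc: "partially_continuous X I f" and adm: "admissible X I f \<xi>"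
    and E': "sym E'" and E'': "sym_entourage X E''"
    and E'_E: "E' O E' \<subseteq> E" and E''_E': "E'' O E'' \<subseteq> E'"
    and cl: "X closure_of (\<xi> n) \<subseteq> X closure_of (\<xi>' n)"
  shows "R_num X I f n \<xi> E \<le> R_num X I f n \<xi>' E''"
  unfolding R_num_def
proof (rule INF_greatest)
  fix F' assume "F' \<in> {F. covering_set X I f n \<xi>' E'' F}"
  then have cover': "\<xi>' n \<subseteq> (\<Union>x\<in>F'. dyn_ball X I f n E'' x)"
    by (simp add: covering_set_def)
  define A where "A = {x \<in> F'. dyn_ball X I f n E' x \<inter> \<xi> n \<noteq> {}}"
  define p where "p x = (SOME y. y \<in> dyn_ball X I f n E' x \<inter> \<xi> n)" for x
  have p: "p x \<in> dyn_ball X I f n E' x \<inter> \<xi> n" if "x \<in> A" for x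
  proof -
    have "\<exists>y. y \<in> dyn_ball X I f n E' x \<inter> \<xi> n"
      using that unfolding A_def by blast
    then show ?thesis
      unfolding p_def by (rule someI_ex)
  qed
  have near_A: "\<exists>x\<in>A. y \<in> dyn_ball X I f n E' x" if "y \<in> \<xi> n" for y
  proof -
    have y: "y \<in> xi_max X I f n" "y \<in> X closure_of (\<xi>' n)"
      using that admissible_subset_xi_max[OF adm] admissible_subset_closure[OF adm] cl by blast+
    obtain z where "z \<in> \<xi>' n" and yz: "orbit_close f n E'' y z"
      using orbit_close_point_of_closure[OF pc sym_entourageD(1)[OF E''] y] by blast
    then obtain x where "x \<in> F'" "z \<in> dyn_ball X I f n E'' x"
      using cover' by blast
    then have xz: "orbit_close f n E'' x z"
      by (simp add: dyn_ball_iff)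
    have "orbit_close f n E' x y"
      using orbit_close_relcomp[OF xz orbit_close_sym[OF sym_entourageD(2)[OF E''] yz]]
      by (rule orbit_close_mono[OF E''_E'])
    then have "y \<in> dyn_ball X I f n E' x"
      using y(1) by (simp add: dyn_ball_iff)
    then show ?thesis
      using \<open>x \<in> F'\<close> that unfolding A_def by blast
  qed
  have "covering_set X I f n \<xi> E (p ` A)"
    unfolding covering_set_def
  proof (intro conjI subsetI)
    fix y assume "y \<in> \<xi> n"
    then obtain x where "x \<in> A" "y \<in> dyn_ball X I f n E' x"
      using near_A by blast
    then have "orbit_close f n E' x y" "y \<in> xi_max X I f n"
      by (simp_all add: dyn_ball_iff)
    moreover have "orbit_close f n E' (p x) x"
      using p[OF \<open>x \<in> A\<close>] orbit_close_sym[OF E'] by (simp add: dyn_ball_iff)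
    ultimately have "y \<in> dyn_ball X I f n E (p x)"
      using orbit_close_mono[OF E'_E orbit_close_relcomp] by (simp add: dyn_ball_iff)
    then show "y \<in> (\<Union>x\<in>p ` A. dyn_ball X I f n E x)"
      using \<open>x \<in> A\<close> by blast
  qed (use p in blast)
  moreover have "ecard (p ` A) \<le> ecard F'"
    by (rule ecard_image_le) (auto simp: A_def)
  ultimately show "(INF F \<in> {F. covering_set X I f n \<xi> E F}. ecard F) \<le> ecard F'"
    by (meson INF_lower2 mem_Collect_eq)
qed

lemma S_num_le_of_closure_subset:
  assumes pc: "partially_continuous X I f"
    and adm: "admissible X I f \<xi>" and adm': "admissible X I f \<xi>'"
    and D: "sym_entourage X D" and DDD_E: "D O D O D \<subseteq> E"
    and cl: "X closure_of (\<xi> n) \<subseteq> X closure_of (\<xi>' n)"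
  shows "S_num X I f n \<xi> E \<le> S_num X I f n \<xi>' D"
  unfolding S_num_def
proof (rule SUP_least)
  fix A assume "A \<in> {F. separated_set X I f n \<xi> E F}"
  then have A: "A \<subseteq> \<xi> n" "\<And>a b. a \<in> A \<Longrightarrow> b \<in> A \<Longrightarrow> a \<noteq> b \<Longrightarrow> a \<notin> dyn_ball X I f n E b"
    by (simp_all add: separated_set_def)
  have A_xi_max: "A \<subseteq> xi_max X I f n"
    using A(1) admissible_subset_xi_max[OF adm] by blast
  have "\<exists>z. z \<in> \<xi>' n \<and> orbit_close f n D a z" if "a \<in> A" for a
  proof -
    have "a \<in> X closure_of (\<xi>' n)"
      using that A(1) admissible_subset_closure[OF adm] cl by blast
    then show ?thesis
      using orbit_close_point_of_closure[OF pc sym_entourageD(1)[OF D]] A_xi_max that by blast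
  qed
  then obtain g where g: "\<And>a. a \<in> A \<Longrightarrow> g a \<in> \<xi>' n \<and> orbit_close f n D a (g a)"
    by metis
  have apart: "g a \<notin> dyn_ball X I f n D (g b)" if "a \<in> A" "b \<in> A" "a \<noteq> b" for a b
  proof
    assume "g a \<in> dyn_ball X I f n D (g b)"
    then have "orbit_close f n D (g b) (g a)"
      by (simp add: dyn_ball_iff)
    then have "orbit_close f n (D O D O D) b a"
      using g that orbit_close_sym[OF sym_entourageD(2)[OF D]] orbit_close_relcomp by metis
    then have "a \<in> dyn_ball X I f n E b"
      using orbit_close_mono[OF DDD_E] A_xi_max that(1) by (auto simp: dyn_ball_iff)
    then show False
      using A(2) that by blast
  qed
  have "inj_on g A"
  proof (rule inj_onI, rule ccontr)
    fix a b assume "a \<in> A" "b \<in> A" "g a = g b" "a \<noteq> b"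
    moreover have "g b \<in> dyn_ball X I f n D (g b)"
      using dyn_ball_centre[OF sym_entourageD(1)[OF D]] g \<open>b \<in> A\<close> admissible_subset_xi_max[OF adm'] by blast
    ultimately show False
      using apart by metis
  qed
  moreover have "separated_set X I f n \<xi>' D (g ` A)"
    using g apart unfolding separated_set_def by blast
  ultimately show "ecard A \<le> (SUP F \<in> {F. separated_set X I f n \<xi>' D F}. ecard F)"
    by (metis SUP_upper ecard_image_inj mem_Collect_eq)
qed

lemma htop_mono_of_closure_subset:
  assumes "compact_space X" "regular_space X" and pc: "partially_continuous X I f"
    and adm: "admissible X I f \<xi>" and adm': "admissible X I f \<xi>'"
    and cl: "\<And>m. N \<le> m \<Longrightarrow> X closure_of (\<xi> m) \<subseteq> X closure_of (\<xi>' m)"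
  shows "htop X I f \<xi> \<le> htop X I f \<xi>'"
proof (cases "\<exists>n. \<xi> n = {}")
  case True
  then show ?thesis by (simp add: htop_def)
next
  case False
  have "\<xi>' m \<noteq> {}" for m
  proof
    assume "\<xi>' m = {}"
    then have "\<xi>' (max N m) = {}"
      using admissible_empty_upward[OF adm'] by simp
    then have "\<xi> (max N m) = {}"
      using cl[of "max N m"] admissible_subset_closure[OF adm, of "max N m"] by simp
    with False show False by blast
  qed
  moreover
  have "(SUP E \<in> {E. entourage X E}. limsup (\<lambda>k. ereal (1 / real k) * elog (S_num X I f k \<xi> E)))
      \<le> (SUP D \<in> {E. entourage X E}. limsup (\<lambda>k. ereal (1 / real k) * elog (S_num X I f k \<xi>' D)))"
  proof (rule SUP_mono)
    fix E assume "E \<in> {E. entourage X E}"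
    then obtain D where D: "sym_entourage X D" "D O D O D \<subseteq> E"
      using sym_entourage_cube_subset[OF assms(1,2)] by blast
    have "eventually (\<lambda>k. S_num X I f k \<xi> E \<le> S_num X I f k \<xi>' D) sequentially"
      unfolding eventually_sequentially
      using S_num_le_of_closure_subset[OF pc adm adm' D] cl by blast
    then have "limsup (\<lambda>k. ereal (1 / real k) * elog (S_num X I f k \<xi> E))
        \<le> limsup (\<lambda>k. ereal (1 / real k) * elog (S_num X I f k \<xi>' D))"
      by (rule limsup_growth_rate_mono)
    with sym_entourageD(1)[OF D(1)] show "\<exists>D \<in> {E. entourage X E}.
        limsup (\<lambda>k. ereal (1 / real k) * elog (S_num X I f k \<xi> E))
        \<le> limsup (\<lambda>k. ereal (1 / real k) * elog (S_num X I f k \<xi>' D))"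
      by blast
  qed
  ultimately show ?thesis
    using False by (simp add: htop_def)
qed

theorem lemma1p12:
  fixes X :: "'a topology" and I :: "'a set" and f :: "'a \<Rightarrow> 'a"
    and \<xi> \<xi>' :: "nat \<Rightarrow> 'a set" and E E' E'' :: "('a \<times> 'a) set" and n :: nat
  assumes "compact_space X" and "Hausdorff_space X"
    and "partially_continuous X I f"
    and "admissible X I f \<xi>" and "admissible X I f \<xi>'"
    and "sym_entourage X E" and "sym_entourage X E'" and "sym_entourage X E''"
    and "E' O E' \<subseteq> E" and "E'' O E'' \<subseteq> E'"
  shows "(\<xi> n \<subseteq> \<xi>' n \<longrightarrow> S_num X I f n \<xi> E \<le> S_num X I f n \<xi>' E)
    \<and> (X closure_of (\<xi> n) \<subseteq> X closure_of (\<xi>' n) \<longrightarrow> R_num X I f n \<xi> E \<le> R_num X I f n \<xi>' E'')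
    \<and> ((\<exists>N. \<forall>m\<ge>N. X closure_of (\<xi> m) \<subseteq> X closure_of (\<xi>' m)) \<longrightarrow> htop X I f \<xi> \<le> htop X I f \<xi>')"
proof (intro conjI impI)
  show "S_num X I f n \<xi> E \<le> S_num X I f n \<xi>' E" if "\<xi> n \<subseteq> \<xi>' n"
    using that by (rule S_num_mono)
  show "R_num X I f n \<xi> E \<le> R_num X I f n \<xi>' E''"
    if "X closure_of (\<xi> n) \<subseteq> X closure_of (\<xi>' n)"
    using R_num_le_of_closure_subset[where \<xi>=\<xi> and \<xi>'=\<xi>' and n=n, OF assms(3,4) sym_entourageD(2)[OF assms(7)] assms(8-10) that] .
  show "htop X I f \<xi> \<le> htop X I f \<xi>'" if "\<exists>N. \<forall>m\<ge>N. X closure_of (\<xi> m) \<subseteq> X closure_of (\<xi>' m)"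
    using that htop_mono_of_closure_subset[OF assms(1) compact_Hausdorff_imp_regular_space[OF assms(1,2)] assms(3-5)]
    by blast
qed

end
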